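(* Let $G$ be a finite solvable group having exactly one normal subgroup other than $1$ and $G$. Then $G$ is not $\psi$-normal divisible.
   Context: For a finite group $G$, $\psi(G)=\sum_{x\in G} o(x)$ denotes the sum of the orders of all elements of $G$. A finite group $G$ is called $\psi$-normal divisible if $\psi(H)$ divides $\psi(G)$ for every normal subgroup $H$ of $G$. *)

theory Defs
  imports "HOL-Algebra.Multiplicative_Group" "HOL-Algebra.Solvable_Groups"
begin

definition psi :: "('a, 'b) monoid_scheme \<Rightarrow> nat" where
  "psi G = (\<Sum>x\<in>carrier G. group.ord G x)"

definition psi_normal_divisible :: "('a, 'b) monoid_scheme \<Rightarrow> bool" where
  "psi_normal_divisible G \<longleftrightarrow>
     (\<forall>H. H \<lhd> G \<longrightarrow> psi (G\<lparr>carrier := H\<rparr>) dvd psi G)"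

end

theory Submission
  imports Defs "HOL-Algebra.Sylow" "HOL-Algebra.Group_Action" "HOL-Algebra.Zassenhaus"
begin

text \<open>
  Let \<open>N\<close> be the unique nontrivial proper normal subgroup. By solvability \<open>N' \<noteq> N\<close>, so \<open>N' = 1\<close>;
  the elements of \<open>N\<close> of order dividing a prime \<open>p\<close> form a normal subgroup, so \<open>N\<close> is
  elementary abelian and \<open>\<psi>(N) = 1 + p(|N| - 1)\<close>, which is coprime to \<open>|N|\<close>.
  If \<open>G\<close> is abelian, every \<open>x \<notin> N\<close> generates \<open>G\<close>, forcing \<open>|N| = p\<close> and \<open>|G| = p\<^sup>2\<close>.
  Otherwise \<open>G' = N\<close>, so every subgroup containing \<open>N\<close> is normal; this makes each \<open>x \<notin> N\<close>
  centralize no nontrivial element of \<open>N\<close>, whence \<open>x\<close> has order \<open>q = |G : N|\<close> and \<open>\<langle>x\<rangle>\<close>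
  acts freely on \<open>N - {1}\<close>, i.e. \<open>q\<close> divides \<open>|N| - 1\<close>.
  In both cases \<open>\<psi>(G) = \<psi>(N) + |N| r s\<close> with \<open>s\<close> coprime to \<open>\<psi>(N)\<close> and \<open>0 < r < \<psi>(N)\<close>
  (\<open>r = p - 1\<close>, \<open>s = p\<^sup>2\<close>, resp. \<open>r = q - 1\<close>, \<open>s = q\<close>), so \<open>\<psi>(N)\<close> does not divide \<open>\<psi>(G)\<close>.
\<close>

lemma not_dvd_self_add_mult:
  fixes P n r s :: nat
  assumes "coprime P n" "coprime P s" "0 < r" "r < P"
  shows "\<not> P dvd P + n * r * s"
proof
  assume "P dvd P + n * r * s"
  hence "P dvd r * (n * s)"
    by (simp add: dvd_add_right_iff ac_simps)
  hence "P dvd r"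
    using assms(1,2) by (simp add: coprime_dvd_mult_left_iff)
  thus False
    using assms(3,4) by (simp add: dvd_imp_le leD)
qed

lemma coprime_one_add_if_dvd:
  fixes m q :: nat
  assumes "q dvd m"
  shows "coprime (1 + m) q"
proof (rule coprimeI)
  fix c assume "c dvd 1 + m" "c dvd q"
  hence "c dvd 1"
    using assms dvd_add_left_iff dvd_trans by blast
  thus "is_unit c"
    by simp
qed

definition centralizer :: "('a, 'b) monoid_scheme \<Rightarrow> 'a \<Rightarrow> 'a set" where
  "centralizer G x = {g \<in> carrier G. g \<otimes>\<^bsub>G\<^esub> x = x \<otimes>\<^bsub>G\<^esub> g}"

definition center :: "('a, 'b) monoid_scheme \<Rightarrow> 'a set" where
  "center G = {z \<in> carrier G. \<forall>g\<in>carrier G. z \<otimes>\<^bsub>G\<^esub> g = g \<otimes>\<^bsub>G\<^esub> z}"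

context group begin

lemma ord_subgroup:
  assumes "subgroup H G" "h \<in> H"
  shows "group.ord (G\<lparr>carrier := H\<rparr>) h = ord h"
proof -
  interpret H: group "G\<lparr>carrier := H\<rparr>"
    using subgroup_imp_group[OF assms(1)] .
  have "h [^]\<^bsub>G\<lparr>carrier := H\<rparr>\<^esub> n = \<one>\<^bsub>G\<lparr>carrier := H\<rparr>\<^esub> \<longleftrightarrow> ord h dvd n" for n :: nat
    using pow_eq_id[OF subgroup.mem_carrier[OF assms], of n] nat_pow_consistent[of h n H] by simp
  thus ?thesis
    using H.ord_unique assms(2) by simp
qed

lemma exists_ord_eq_prime:
  assumes "finite (carrier G)" "prime r" "r dvd order G"
  shows "\<exists>x\<in>carrier G. ord x = r"
proof -
  have "order G = r ^ 1 * (order G div r)"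
    using assms(3) by simp
  then obtain K where K: "subgroup K G" "card K = r"
    using sylow_thm[OF assms(2) is_group _ assms(1)] by fastforce
  moreover have "K \<noteq> {\<one>}"
    using K(2) prime_gt_1_nat[OF assms(2)] by auto
  ultimately obtain k where k: "k \<in> K" "k \<noteq> \<one>"
    using subgroup.one_closed by blast
  have "ord k dvd r"
    using group.ord_dvd_group_order[OF subgroup_imp_group[OF K(1)], of k] k(1) K
      ord_subgroup[OF K(1) k(1)] by (simp add: order_def)
  moreover have "ord k \<noteq> 1"
    using k subgroup.mem_carrier[OF K(1)] ord_eq_1 by blast
  ultimately show ?thesis
    using assms(2) k(1) subgroup.mem_carrier[OF K(1)] by (meson prime_nat_iff)
qed

lemma exists_ord_eq_prime_subgroup:
  assumes "finite (carrier G)" "subgroup H G" "prime r" "r dvd card H"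
  shows "\<exists>h\<in>H. ord h = r"
proof -
  have "\<exists>h\<in>carrier (G\<lparr>carrier := H\<rparr>). group.ord (G\<lparr>carrier := H\<rparr>) h = r"
    by (rule group.exists_ord_eq_prime[OF subgroup_imp_group[OF assms(2)]])
      (use assms finite_subset[OF subgroup.subset[OF assms(2)]] in \<open>auto simp: order_def\<close>)
  thus ?thesis
    using ord_subgroup[OF assms(2)] by auto
qed

lemma psi_split_subgroup:
  assumes "finite (carrier G)" "subgroup H G"
  shows "psi G = psi (G\<lparr>carrier := H\<rparr>) + (\<Sum>x\<in>carrier G - H. ord x)"
proof -
  have "psi (G\<lparr>carrier := H\<rparr>) = (\<Sum>x\<in>H. ord x)"
    unfolding psi_def using ord_subgroup[OF assms(2)] by simp
  thus ?thesis
    unfolding psi_def using sum.subset_diff[OF subgroup.subset[OF assms(2)] assms(1)] by (simp add: add.commute)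
qed

lemma card_set_mult_le:
  assumes "finite H" "finite K"
  shows "card (H <#> K) \<le> card H * card K"
proof -
  have "H <#> K = (\<lambda>(h, k). h \<otimes> k) ` (H \<times> K)"
    unfolding set_mult_def by auto
  thus ?thesis
    using card_image_le[of "H \<times> K"] assms by (simp add: card_cartesian_product)
qed

lemma solvable_derived_fixpoint_trivial:
  assumes "solvable G" "H \<subseteq> carrier G" "derived G H = H"
  shows "H \<subseteq> {\<one>}"
proof -
  obtain n where "(derived G ^^ n) (carrier G) = {\<one>}"
    using assms(1) solvable_iff_trivial_derived_seq by blast
  moreover have "(derived G ^^ n) H = H"
    using assms(3) by (induction n) simp_all
  ultimately show ?thesis
    using mono_exp_of_derived[OF assms(2), of n] by simp
qed

lemma commutator_in_derived:
  assumes "a \<in> H" "b \<in> H"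
  shows "a \<otimes> b \<otimes> inv a \<otimes> inv b \<in> derived G H"
  unfolding derived_def by (rule generate.incl) (use assms in blast)

lemma commute_if_commutator_one:
  assumes "a \<in> carrier G" "b \<in> carrier G" "a \<otimes> b \<otimes> inv a \<otimes> inv b = \<one>"
  shows "a \<otimes> b = b \<otimes> a"
  using assms by (metis inv_closed inv_solve_right l_one m_closed)

lemma normal_if_derived_subset:
  assumes "subgroup H G" "derived G (carrier G) \<subseteq> H"
  shows "H \<lhd> G"
  unfolding normal_inv_iff
proof (intro conjI ballI assms(1))
  fix g h assume g: "g \<in> carrier G" and h: "h \<in> H"
  have hc: "h \<in> carrier G"
    using subgroup.mem_carrier[OF assms(1) h] .
  have "g \<otimes> h \<otimes> inv g \<otimes> inv h \<in> H"
    using commutator_in_derived[OF g hc] assms(2) by blast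
  hence "g \<otimes> h \<otimes> inv g \<otimes> inv h \<otimes> h \<in> H"
    using subgroup.m_closed[OF assms(1) _ h] by blast
  thus "g \<otimes> h \<otimes> inv g \<in> H"
    using g hc by (simp add: m_assoc)
qed

lemma inv_commute:
  assumes "g \<in> carrier G" "x \<in> carrier G" "g \<otimes> x = x \<otimes> g"
  shows "inv g \<otimes> x = x \<otimes> inv g"
proof -
  have "inv g \<otimes> x = inv g \<otimes> x \<otimes> (g \<otimes> inv g)"
    using assms(1,2) by simp
  also have "\<dots> = inv g \<otimes> (g \<otimes> x) \<otimes> inv g"
    using assms by (simp add: m_assoc)
  also have "\<dots> = x \<otimes> inv g"
    using assms(1,2) by (simp add: m_assoc[symmetric])
  finally show ?thesis .
qed

lemma subgroup_centralizer:
  assumes "x \<in> carrier G"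
  shows "subgroup (centralizer G x) G"
proof (rule subgroupI)
  fix a b assume a: "a \<in> centralizer G x" and b: "b \<in> centralizer G x"
  have ac: "a \<in> carrier G" "a \<otimes> x = x \<otimes> a" and bc: "b \<in> carrier G" "b \<otimes> x = x \<otimes> b"
    using a b by (auto simp: centralizer_def)
  have "a \<otimes> b \<otimes> x = a \<otimes> (x \<otimes> b)"
    using ac bc assms by (simp add: m_assoc)
  also have "\<dots> = x \<otimes> (a \<otimes> b)"
    using ac bc assms by (simp add: m_assoc[symmetric])
  finally show "a \<otimes> b \<in> centralizer G x"
    using a b by (simp add: centralizer_def)
qed (use assms inv_commute in \<open>auto simp: centralizer_def\<close>)

lemma center_normal: "center G \<lhd> G"
  unfolding normal_inv_iff
proof (intro conjI ballI)
  show "subgroup (center G) G"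
  proof (rule subgroupI)
    show "center G \<subseteq> carrier G" "center G \<noteq> {}"
      unfolding center_def by force+
  next
    fix a assume "a \<in> center G"
    thus "inv a \<in> center G"
      unfolding center_def using inv_commute by blast
  next
    fix a b assume a: "a \<in> center G" and b: "b \<in> center G"
    have ac: "a \<in> carrier G" "\<And>g. g \<in> carrier G \<Longrightarrow> a \<otimes> g = g \<otimes> a"
      and bc: "b \<in> carrier G" "\<And>g. g \<in> carrier G \<Longrightarrow> b \<otimes> g = g \<otimes> b"
      using a b unfolding center_def by blast+
    have "a \<otimes> b \<otimes> g = g \<otimes> (a \<otimes> b)" if g: "g \<in> carrier G" for g
    proof -
      have "a \<otimes> b \<otimes> g = a \<otimes> (g \<otimes> b)"
        using ac(1) bc g by (simp add: m_assoc)
      also have "\<dots> = (a \<otimes> g) \<otimes> b"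
        using ac(1) bc(1) g by (simp add: m_assoc)
      also have "\<dots> = g \<otimes> (a \<otimes> b)"
        using ac bc(1) g by (simp add: m_assoc)
      finally show ?thesis .
    qed
    thus "a \<otimes> b \<in> center G"
      unfolding center_def using ac(1) bc(1) by blast
  qed
next
  fix g z assume g: "g \<in> carrier G" and z: "z \<in> center G"
  hence "g \<otimes> z = z \<otimes> g" "z \<in> carrier G"
    unfolding center_def by auto
  hence "g \<otimes> z \<otimes> inv g = z"
    using g by (simp add: m_assoc)
  thus "g \<otimes> z \<otimes> inv g \<in> center G"
    using z by simp
qed

lemma conj_nat_pow:
  assumes "g \<in> carrier G" "x \<in> carrier G"
  shows "(g \<otimes> x \<otimes> inv g) [^] (n::nat) = g \<otimes> x [^] n \<otimes> inv g"
proof (induction n)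
  case (Suc n)
  thus ?case
    using assms by (simp add: m_assoc) (simp add: m_assoc[symmetric])
qed (use assms in simp)

end

lemma (in normal) pow_card_rcosets_mem:
  assumes "x \<in> carrier G"
  shows "x [^] card (rcosets H) \<in> H"
proof -
  interpret Q: group "G Mod H"
    using factorgroup_is_group .
  have hom: "group_hom G (G Mod H) (\<lambda>a. H #> a)"
    using r_coset_hom_Mod Q.is_group by (simp add: group_hom_def group_hom_axioms_def)
  have "H #> x \<in> carrier (G Mod H)"
    using assms by (simp add: FactGroup_def rcosI RCOSETS_def) blast
  hence "(H #> x) [^]\<^bsub>G Mod H\<^esub> card (rcosets H) = H"
    using Q.pow_order_eq_1 by (simp add: order_def FactGroup_def)
  hence "H #> (x [^] card (rcosets H)) = H"
    using group_hom.hom_nat_pow[OF hom assms] by simp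
  thus ?thesis
    using coset_join1 assms is_subgroup by blast
qed

lemma (in group_action) restricted_action:
  assumes "F \<subseteq> E" and invariant: "\<And>g x. g \<in> carrier G \<Longrightarrow> x \<in> F \<Longrightarrow> \<phi> g x \<in> F"
  shows "group_action G F (\<lambda>g. restrict (\<phi> g) F)"
proof -
  have grp: "group G"
    using group_hom group_hom.axioms(1) by blast
  have bij: "restrict (\<phi> g) F \<in> Bij F" if g: "g \<in> carrier G" for g
  proof -
    have "inj_on (\<phi> g) F"
      using inj_prop[OF g] assms(1) inj_on_subset by blast
    moreover have "y \<in> \<phi> g ` F" if y: "y \<in> F" for y
    proof -
      have "\<phi> g (\<phi> (inv g) y) = \<phi> (g \<otimes> inv g) y"
        using composition_rule y g assms(1) grp by (simp add: group.inv_closed subsetD)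
      also have "\<dots> = y"
        using y g assms(1) grp id_eq_one[symmetric] by (auto simp: group.r_inv)
      finally show ?thesis
        using invariant[OF group.inv_closed[OF grp g] y] by (metis image_eqI)
    qed
    ultimately have "bij_betw (\<phi> g) F F"
      using invariant[OF g] unfolding bij_betw_def by blast
    thus ?thesis
      unfolding Bij_def by simp
  qed
  have "restrict (\<phi> (g \<otimes> h)) F = compose F (restrict (\<phi> g) F) (restrict (\<phi> h) F)"
    if "g \<in> carrier G" "h \<in> carrier G" for g h
    using that invariant assms(1) by (auto simp: compose_def composition_rule subsetD intro!: restrict_ext)
  thus ?thesis
    unfolding group_action_def group_hom_def group_hom_axioms_def hom_def
    using grp group_BijGroup bij by (auto simp: BijGroup_def)
qed

lemma (in group_action) order_dvd_card_if_free:
  assumes "finite E" and free: "\<And>x. x \<in> E \<Longrightarrow> stabilizer G \<phi> x = {\<one>}"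
  shows "order G dvd card E"
proof -
  have "card orb = order G" if "orb \<in> orbits G E \<phi>" for orb
    using that orbit_stabilizer_theorem free unfolding orbits_def by fastforce
  hence "order G dvd (\<Sum>orb\<in>orbits G E \<phi>. card orb)"
    by (intro dvd_sum) simp
  moreover have "(\<Sum>orb\<in>orbits G E \<phi>. card orb) = card E"
    unfolding card_eq_sum using disjoint_sum[OF assms(1), of "\<lambda>_. 1"] .
  ultimately show ?thesis
    by simp
qed

lemma (in group) conjugation_action_on_normal:
  assumes "N \<lhd> G" "subgroup H G"
  shows "group_action (G\<lparr>carrier := H\<rparr>) (N - {\<one>})
           (\<lambda>g. restrict (\<lambda>h\<in>carrier G. g \<otimes> h \<otimes> inv g) (N - {\<one>}))"
proof (rule group_action.restricted_action[OF group_action.induced_action[OF action_by_conjugation assms(2)]])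
  show N: "N - {\<one>} \<subseteq> carrier G"
    using normal_imp_subgroup[OF assms(1)] subgroup.subset by blast
  fix g u assume g: "g \<in> carrier (G\<lparr>carrier := H\<rparr>)" and u: "u \<in> N - {\<one>}"
  have gu: "g \<in> carrier G" "u \<in> carrier G"
    using g u subgroup.mem_carrier[OF assms(2)] N by auto
  moreover have "g \<otimes> u \<otimes> inv g \<noteq> g \<otimes> \<one> \<otimes> inv g"
    using conjugation_is_inj gu u by blast
  ultimately show "(\<lambda>h\<in>carrier G. g \<otimes> h \<otimes> inv g) u \<in> N - {\<one>}"
    using normal.inv_op_closed2[OF assms(1)] u by simp
qed

section \<open>Groups with a unique nontrivial proper normal subgroup\<close>

locale unique_proper_normal = group G for G (structure) + fixes N
  assumes finite_carrier: "finite (carrier G)"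
    and solvable: "solvable G"
    and N_normal: "N \<lhd> G"
    and N_nontrivial: "N \<noteq> {\<one>}"
    and N_proper: "N \<noteq> carrier G"
    and normal_unique: "\<And>K. K \<lhd> G \<Longrightarrow> K \<noteq> {\<one>} \<Longrightarrow> K \<noteq> carrier G \<Longrightarrow> K = N"
begin

lemma N_subgroup: "subgroup N G"
  using normal_imp_subgroup[OF N_normal] .

lemma N_subset: "N \<subseteq> carrier G"
  using subgroup.subset[OF N_subgroup] .

lemma finite_N: "finite N"
  using finite_subset[OF N_subset finite_carrier] .

lemma card_N_ge_2: "2 \<le> card N"
proof -
  obtain u where "u \<in> N" "u \<noteq> \<one>"
    using N_nontrivial subgroup.one_closed[OF N_subgroup] by blast
  hence "{\<one>, u} \<subseteq> N"
    using subgroup.one_closed[OF N_subgroup] by blast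
  moreover have "card {\<one>, u} = 2"
    using \<open>u \<noteq> \<one>\<close> by simp
  ultimately show ?thesis
    using card_mono[OF finite_N] by metis
qed

lemma normal_subset_N_eq:
  assumes "K \<lhd> G" "K \<subseteq> N" "K \<noteq> {\<one>}"
  shows "K = N"
  using assms N_proper N_subset normal_unique by blast

lemma normal_eq_carrier:
  assumes "K \<lhd> G" "x \<in> K" "x \<notin> N"
  shows "K = carrier G"
  using assms normal_unique subgroup.one_closed[OF N_subgroup] by blast

lemma N_commute:
  assumes "a \<in> N" "b \<in> N"
  shows "a \<otimes> b = b \<otimes> a"
proof -
  have "derived G N \<noteq> N"
    using solvable_derived_fixpoint_trivial[OF solvable N_subset] N_nontrivial
      subgroup.one_closed[OF N_subgroup] by blast
  hence "derived G N = {\<one>}"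
    using normal_subset_N_eq[OF derived_is_normal[OF N_normal] derived_incl[OF subset_refl N_subgroup]]
    by blast
  thus ?thesis
    using commutator_in_derived[OF assms] commute_if_commutator_one N_subset assms by blast
qed

lemma N_prime_exponent:
  obtains p where "prime p" "\<And>u. u \<in> N \<Longrightarrow> u \<noteq> \<one> \<Longrightarrow> ord u = p"
proof -
  have "card N \<noteq> 1"
    using card_N_ge_2 by simp
  then obtain p where p: "prime p" "p dvd card N"
    using prime_factor_nat by blast
  then obtain w where w: "w \<in> N" "ord w = p"
    using exists_ord_eq_prime_subgroup[OF finite_carrier N_subgroup] by blast
  define Np where "Np = {v \<in> N. v [^] p = \<one>}"
  have "Np \<lhd> G"
    unfolding normal_inv_iff
  proof (intro conjI ballI)
    show "subgroup Np G"
    proof (rule subgroupI)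
      fix a b assume "a \<in> Np" "b \<in> Np"
      thus "a \<otimes> b \<in> Np"
        unfolding Np_def using N_commute N_subset subgroup.m_closed[OF N_subgroup]
          pow_mult_distrib[of a b p] by auto
    qed (use N_subset subgroup.one_closed[OF N_subgroup] subgroup.m_inv_closed[OF N_subgroup]
          in \<open>auto simp: Np_def nat_pow_inv\<close>)
  next
    fix g v assume "g \<in> carrier G" "v \<in> Np"
    thus "g \<otimes> v \<otimes> inv g \<in> Np"
      unfolding Np_def using N_subset normal.inv_op_closed2[OF N_normal] by (auto simp: conj_nat_pow)
  qed
  moreover have "w \<in> Np" "w \<noteq> \<one>"
    using w N_subset p(1) by (auto simp: Np_def)
  ultimately have "Np = N"
    using normal_subset_N_eq unfolding Np_def by blast
  hence "ord u = p" if "u \<in> N" "u \<noteq> \<one>" for u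
    using that p(1) N_subset pow_eq_id ord_eq_1 unfolding Np_def prime_nat_iff by blast
  thus thesis
    using p(1) that by blast
qed

lemma card_N_dvd_order: "card N dvd order G"
  using lagrange[OF N_subgroup] by (metis dvd_triv_right)

lemma card_N_less_order: "card N < order G"
  unfolding order_def using psubset_card_mono[OF finite_carrier] N_subset N_proper by blast

lemma psi_eq_psi_N_add:
  assumes "\<And>x. x \<in> carrier G - N \<Longrightarrow> ord x = s" "order G = r * card N"
  shows "psi G = psi (G\<lparr>carrier := N\<rparr>) + card N * (r - 1) * s"
proof -
  have "card (carrier G - N) = card N * (r - 1)"
    using card_Diff_subset[OF finite_N N_subset] assms(2) by (simp add: order_def algebra_simps)
  thus ?thesis
    using psi_split_subgroup[OF finite_carrier N_subgroup] assms(1) by simp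
qed

lemma ord_outside_N_abelian:
  assumes "comm_group G" "x \<in> carrier G - N"
  shows "ord x = order G"
proof -
  have "generate G {x} \<lhd> G"
    using comm_group.subgroup_imp_normal[OF assms(1)] generate_is_subgroup assms(2) by auto
  moreover have "x \<in> generate G {x}"
    by (simp add: generate.incl)
  ultimately have "generate G {x} = carrier G"
    using normal_eq_carrier assms(2) by blast
  thus ?thesis
    using generate_pow_card assms(2) by (simp add: order_def)
qed


lemma derived_eq_N:
  assumes "\<not> comm_group G"
  shows "derived G (carrier G) = N"
proof (rule normal_unique[OF derived_self_is_normal])
  show "derived G (carrier G) \<noteq> carrier G"
    using solvable_derived_fixpoint_trivial[OF solvable subset_refl] N_nontrivial N_subset
      subgroup.one_closed[OF N_subgroup] by blast
  show "derived G (carrier G) \<noteq> {\<one>}"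
  proof
    assume "derived G (carrier G) = {\<one>}"
    hence "comm_group G"
      using commutator_in_derived commute_if_commutator_one by (blast intro: group_comm_groupI)
    thus False
      using assms by contradiction
  qed
qed

lemma subgroup_over_N_eq_carrier:
  assumes "\<not> comm_group G" "subgroup H G" "N \<subseteq> H" "x \<in> H" "x \<notin> N"
  shows "H = carrier G"
  using normal_eq_carrier normal_if_derived_subset derived_eq_N assms by blast

lemma center_eq_N:
  assumes "\<not> comm_group G" "u \<in> N" "u \<noteq> \<one>" "x \<in> carrier G - N" "u \<otimes> x = x \<otimes> u"
  shows "center G = N"
proof (rule normal_unique[OF center_normal])
  have "N \<subseteq> centralizer G u"
    using N_commute assms(2) N_subset by (auto simp: centralizer_def)
  moreover have "x \<in> centralizer G u"
    using assms(4,5) by (simp add: centralizer_def)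
  ultimately have "centralizer G u = carrier G"
    using subgroup_over_N_eq_carrier[OF assms(1) subgroup_centralizer] assms N_subset by blast
  hence "g \<otimes> u = u \<otimes> g" if "g \<in> carrier G" for g
    using that unfolding centralizer_def by blast
  hence "u \<in> center G"
    using assms(2) N_subset unfolding center_def by force
  thus "center G \<noteq> {\<one>}"
    using assms(3) by blast
  show "center G \<noteq> carrier G"
    using assms(1) group_comm_groupI by (auto simp: center_def)
qed

lemma fixed_point_free:
  assumes "\<not> comm_group G" "x \<in> carrier G - N" "u \<in> N" "u \<otimes> x = x \<otimes> u"
  shows "u = \<one>"
proof (rule ccontr)
  assume "u \<noteq> \<one>"
  hence Z: "center G = N"
    using center_eq_N assms by blast
  have "N \<subseteq> centralizer G x"
    using assms(2) by (auto simp: Z[symmetric] center_def centralizer_def)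
  moreover have "x \<in> centralizer G x"
    using assms(2) by (simp add: centralizer_def)
  ultimately have "centralizer G x = carrier G"
    using subgroup_over_N_eq_carrier[OF assms(1) subgroup_centralizer] assms(2) by blast
  hence "g \<otimes> x = x \<otimes> g" if "g \<in> carrier G" for g
    using that unfolding centralizer_def by blast
  hence "x \<in> center G"
    using assms(2) unfolding center_def by force
  thus False
    using Z assms(2) by blast
qed

lemma ord_outside_N:
  assumes "\<not> comm_group G" "x \<in> carrier G - N"
  shows "ord x = card (rcosets N)"
proof -
  have x: "x \<in> carrier G"
    using assms(2) by blast
  have "x [^] card (rcosets N) \<otimes> x = x \<otimes> x [^] card (rcosets N)"
    using x by (metis nat_pow_Suc nat_pow_Suc2)
  hence "x [^] card (rcosets N) = \<one>"
    using fixed_point_free[OF assms] normal.pow_card_rcosets_mem[OF N_normal x] by blast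
  hence "ord x dvd card (rcosets N)"
    using pow_eq_id[OF x] by blast
  have gen: "subgroup (generate G {x}) G"
    using generate_is_subgroup x by simp
  have "N \<subseteq> N <#> generate G {x}"
    using N_subset subgroup.one_closed[OF gen] unfolding set_mult_def by force
  moreover have "x \<in> N <#> generate G {x}"
    using x subgroup.one_closed[OF N_subgroup] generate.incl[of x "{x}" G]
    unfolding set_mult_def by force
  ultimately have "N <#> generate G {x} = carrier G"
    using subgroup_over_N_eq_carrier[OF assms(1) mult_norm_subgroup[OF N_normal gen]] assms(2) by blast
  hence "card (rcosets N) * card N \<le> ord x * card N"
    using lagrange[OF N_subgroup] card_set_mult_le[OF finite_N] generate_pow_card[OF x]
      finite_subset[OF subgroup.subset[OF gen] finite_carrier]
    by (metis mult.commute order_def)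
  hence "card (rcosets N) \<le> ord x"
    using card_N_ge_2 by simp
  moreover have "0 < card (rcosets N)"
    using lagrange[OF N_subgroup] card_N_less_order by (metis gr0I less_nat_zero_code mult_0)
  ultimately show ?thesis
    using \<open>ord x dvd card (rcosets N)\<close> by (simp add: dvd_imp_le le_antisym)
qed

lemma conjugation_free_on_N:
  assumes "\<not> comm_group G" "x \<in> carrier G - N" "g \<in> generate G {x}" "u \<in> N - {\<one>}"
    and "g \<otimes> u \<otimes> inv g = u"
  shows "g = \<one>"
proof -
  have "generate G {x} \<subseteq> centralizer G x"
    using generate_subgroup_incl subgroup_centralizer assms(2) by (simp add: centralizer_def)
  hence g: "g \<in> carrier G" "g \<otimes> x = x \<otimes> g"
    using assms(3) by (auto simp: centralizer_def)
  show ?thesis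
  proof (cases "g \<in> N")
    case True
    thus ?thesis
      using fixed_point_free[OF assms(1,2)] g(2) by blast
  next
    case False
    have "u \<otimes> g = g \<otimes> u"
      using assms(4,5) g(1) N_subset inv_solve_right[of u "g \<otimes> u" g] by auto
    thus ?thesis
      using fixed_point_free[OF assms(1), of g u] False assms(4) g(1) by blast
  qed
qed

text \<open>Count the orbits of the free conjugation action of \<open>\<langle>x\<rangle>\<close>, of order \<open>|G : N|\<close>, on \<open>N - {\<one>}\<close>.\<close>

lemma index_dvd_card_N_minus_one:
  assumes "\<not> comm_group G"
  shows "card (rcosets N) dvd card N - 1"
proof -
  obtain x where x: "x \<in> carrier G - N"
    using N_subset N_proper by blast
  define H where "H = generate G {x}"
  have H: "subgroup H G"
    unfolding H_def using generate_is_subgroup x by simp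
  let ?\<phi> = "\<lambda>g. restrict (\<lambda>h\<in>carrier G. g \<otimes> h \<otimes> inv g) (N - {\<one>})"
  interpret conj: group_action "G\<lparr>carrier := H\<rparr>" "N - {\<one>}" ?\<phi>
    using conjugation_action_on_normal[OF N_normal H] .
  have "stabilizer (G\<lparr>carrier := H\<rparr>) ?\<phi> u = {\<one>}" if u: "u \<in> N - {\<one>}" for u
  proof -
    have "stabilizer (G\<lparr>carrier := H\<rparr>) ?\<phi> u = {g \<in> H. g \<otimes> u \<otimes> inv g = u}"
      unfolding stabilizer_def using u N_subset by auto
    moreover have "\<one> \<otimes> u \<otimes> inv \<one> = u"
      using u N_subset by auto
    ultimately show ?thesis
      using conjugation_free_on_N[OF assms x _ u] subgroup.one_closed[OF H] unfolding H_def by blast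
  qed
  hence "order (G\<lparr>carrier := H\<rparr>) dvd card (N - {\<one>})"
    using conj.order_dvd_card_if_free[OF finite_Diff[OF finite_N]] by simp
  moreover have "order (G\<lparr>carrier := H\<rparr>) = card (rcosets N)"
    using ord_outside_N[OF assms x] generate_pow_card x unfolding H_def by (simp add: order_def)
  ultimately show ?thesis
    using finite_N subgroup.one_closed[OF N_subgroup] by simp
qed

context
  fixes p
  assumes prime_p: "prime p"
    and ord_N: "\<And>u. u \<in> N \<Longrightarrow> u \<noteq> \<one> \<Longrightarrow> ord u = p"
begin

lemma psi_N: "psi (G\<lparr>carrier := N\<rparr>) = 1 + p * (card N - 1)"
proof -
  have one: "\<one> \<in> N"
    using subgroup.one_closed[OF N_subgroup] .
  have "psi (G\<lparr>carrier := N\<rparr>) = (\<Sum>u\<in>N. ord u)"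
    unfolding psi_def using ord_subgroup[OF N_subgroup] by simp
  also have "\<dots> = ord \<one> + (\<Sum>u\<in>N - {\<one>}. ord u)"
    using sum.remove[OF finite_N one] .
  also have "(\<Sum>u\<in>N - {\<one>}. ord u) = (\<Sum>u\<in>N - {\<one>}. p)"
    using ord_N by (intro sum.cong) auto
  finally show ?thesis
    using one finite_N by simp
qed

lemma coprime_psi_N_card_N: "coprime (1 + p * (card N - 1)) (card N)"
proof (rule coprimeI)
  fix c assume c: "c dvd 1 + p * (card N - 1)" "c dvd card N"
  show "is_unit c"
  proof (rule ccontr)
    assume "\<not> is_unit c"
    then obtain r where r: "prime r" "r dvd c"
      using prime_factor_nat by auto
    then obtain u where u: "u \<in> N" "ord u = r"
      using exists_ord_eq_prime_subgroup[OF finite_carrier N_subgroup] dvd_trans c(2) by blast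
    have "u \<noteq> \<one>"
      using u(2) r(1) by auto
    hence "r = p"
      using ord_N u by simp
    hence "p dvd 1 + p * (card N - 1)"
      using r(2) c(1) dvd_trans by blast
    hence "p dvd 1"
      by (metis dvd_add_left_iff dvd_triv_left)
    thus False
      using prime_p by simp
  qed
qed

lemma abelian_order_dvd_square:
  assumes "comm_group G"
  shows "order G dvd p ^ 2"
proof -
  obtain x where x: "x \<in> carrier G" "x \<notin> N"
    using N_subset N_proper by blast
  have ord_x: "ord x = order G"
    using ord_outside_N_abelian[OF assms] x by blast
  obtain w where w: "w \<in> N" "w \<noteq> \<one>"
    using N_nontrivial subgroup.one_closed[OF N_subgroup] by blast
  have "p dvd order G"
    using ord_dvd_group_order[of w] ord_N[OF w] w(1) N_subset by auto
  have "x [^] p \<in> N"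
  proof (rule ccontr)
    assume "x [^] p \<notin> N"
    hence "ord (x [^] p) = order G"
      using ord_outside_N_abelian[OF assms] x(1) by simp
    moreover have "ord (x [^] p) = order G div p"
      using ord_pow[OF x(1)] ord_x \<open>p dvd order G\<close> prime_gt_0_nat[OF prime_p] by simp
    moreover have "0 < order G"
      using card_N_less_order by simp
    ultimately show False
      using div_less_dividend prime_gt_1_nat[OF prime_p] by (metis less_irrefl)
  qed
  hence "(x [^] p) [^] p = \<one>"
    using ord_N pow_ord_eq_1[of "x [^] p"] x(1) by (cases "x [^] p = \<one>") auto
  thus ?thesis
    using pow_eq_id[OF x(1), of "p * p"] ord_x nat_pow_pow[OF x(1)] by (simp add: power2_eq_square)
qed

lemma abelian_orders:
  assumes "comm_group G"
  shows "card N = p" "order G = p * p"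
proof -
  obtain j where j: "j \<le> 2" "order G = p ^ j"
    using abelian_order_dvd_square[OF assms] divides_primepow_nat[OF prime_p] by blast
  moreover obtain i where i: "i \<le> 2" "card N = p ^ i"
    using abelian_order_dvd_square[OF assms] card_N_dvd_order divides_primepow_nat[OF prime_p]
      dvd_trans by metis
  moreover have "p ^ i < p ^ j"
    using card_N_less_order i j by simp
  hence "i < j"
    using prime_gt_1_nat[OF prime_p] by (simp add: power_strict_increasing_iff)
  moreover have "i \<noteq> 0"
    using card_N_ge_2 i(2) by (cases "i = 0") simp_all
  ultimately have "i = 1" "j = 2"
    by auto
  thus "card N = p" "order G = p * p"
    using i j by (simp_all add: power2_eq_square)
qed

lemma card_N_le_psi_N: "card N \<le> psi (G\<lparr>carrier := N\<rparr>)"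
proof -
  have "card N - 1 \<le> p * (card N - 1)"
    using prime_gt_0_nat[OF prime_p] by simp
  thus ?thesis
    unfolding psi_N by linarith
qed

lemma psi_N_not_dvd_psi_abelian:
  assumes "comm_group G"
  shows "\<not> psi (G\<lparr>carrier := N\<rparr>) dvd psi G"
proof -
  note orders = abelian_orders[OF assms]
  have psi_G: "psi G = psi (G\<lparr>carrier := N\<rparr>) + card N * (p - 1) * (p * p)"
    using psi_eq_psi_N_add[of "p * p" p] ord_outside_N_abelian[OF assms] orders by simp
  have "coprime (psi (G\<lparr>carrier := N\<rparr>)) (p * p)"
    using coprime_psi_N_card_N orders psi_N by simp
  moreover have "0 < p - 1" "p - 1 < psi (G\<lparr>carrier := N\<rparr>)"
    using prime_gt_1_nat[OF prime_p] card_N_le_psi_N orders by auto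
  ultimately show ?thesis
    unfolding psi_G using not_dvd_self_add_mult coprime_psi_N_card_N psi_N by metis
qed

lemma psi_N_not_dvd_psi_nonabelian:
  assumes "\<not> comm_group G"
  shows "\<not> psi (G\<lparr>carrier := N\<rparr>) dvd psi G"
proof -
  define q where "q = card (rcosets N)"
  have "order G = q * card N"
    unfolding q_def using lagrange[OF N_subgroup] by simp
  hence psi_G: "psi G = psi (G\<lparr>carrier := N\<rparr>) + card N * (q - 1) * q"
    using psi_eq_psi_N_add ord_outside_N[OF assms] unfolding q_def by blast
  have "q dvd card N - 1"
    unfolding q_def using index_dvd_card_N_minus_one[OF assms] .
  hence coprime_q: "coprime (psi (G\<lparr>carrier := N\<rparr>)) q"
    unfolding psi_N by (intro coprime_one_add_if_dvd) simp
  have "1 < q"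
    using \<open>order G = q * card N\<close> card_N_less_order by (cases "q \<le> 1") (auto simp: not_le)
  moreover have "q \<le> card N - 1"
    using \<open>q dvd card N - 1\<close> card_N_ge_2 by (simp add: dvd_imp_le)
  ultimately have "0 < q - 1" "q - 1 < psi (G\<lparr>carrier := N\<rparr>)"
    using card_N_le_psi_N by auto
  with coprime_q show ?thesis
    unfolding psi_G using not_dvd_self_add_mult coprime_psi_N_card_N psi_N by metis
qed

end

lemma psi_N_not_dvd_psi: "\<not> psi (G\<lparr>carrier := N\<rparr>) dvd psi G"
proof -
  obtain p where "prime p" "\<And>u. u \<in> N \<Longrightarrow> u \<noteq> \<one> \<Longrightarrow> ord u = p"
    using N_prime_exponent by blast
  thus ?thesis
    using psi_N_not_dvd_psi_abelian psi_N_not_dvd_psi_nonabelian by blast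
qed

end

theorem proposition3p2:
  fixes G :: "('a, 'b) monoid_scheme"
  assumes "group G"
    and "finite (carrier G)"
    and "solvable G"
    and "\<exists>!N. N \<lhd> G \<and> N \<noteq> {\<one>\<^bsub>G\<^esub>} \<and> N \<noteq> carrier G"
  shows "\<not> psi_normal_divisible G"
proof
  assume divisible: "psi_normal_divisible G"
  obtain N where N: "N \<lhd> G" "N \<noteq> {\<one>\<^bsub>G\<^esub>}" "N \<noteq> carrier G"
    and unique: "\<And>K. K \<lhd> G \<and> K \<noteq> {\<one>\<^bsub>G\<^esub>} \<and> K \<noteq> carrier G \<Longrightarrow> K = N"
    using assms(4) by blast
  interpret unique_proper_normal G N
    by (intro unique_proper_normal.intro unique_proper_normal_axioms.intro assms(1-3) N)
      (simp add: unique)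
  have "psi (G\<lparr>carrier := N\<rparr>) dvd psi G"
    using divisible N(1) unfolding psi_normal_divisible_def by blast
  thus False
    using psi_N_not_dvd_psi by contradiction
qed

end
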